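(* Let $p\geq 1$ be an integer and let $\mathcal{K}_p$ be the integral operator on $L^2([-1,1])$ given by $\mathcal{K}_p[h](x)=\int_{-1}^1\mathcal{G}_p(x,y)h(y)\,dy$, where $\mathcal{G}_p(x,y)=\int_{-1}^1 \mathrm{ReLU}^p(z-x)\,\mathrm{ReLU}^p(z-y)\,dz$. Let $\mu_{1,p}>\mu_{2,p}>\cdots$ be the eigenvalues of $\mathcal{K}_p$ in descending order, with corresponding eigenfunctions $\varphi_{k,p}$ (so $\mathcal{K}_p[\varphi_{k,p}]=\mu_{k,p}\varphi_{k,p}$). Then, as $k\to+\infty$, $$\mu_{k,p}=\mathcal{O}\big(k^{-(2p+2)}\big).$$
   Context: $\mathrm{ReLU}^p(z)=(\max\{0,z\})^p$. The operator $\mathcal{K}_p$ is a compact self-adjoint operator on $L^2([-1,1])$ with positive eigenvalues. *)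

theory Defs
  imports "HOL-Analysis.Analysis" "HOL-Library.Landau_Symbols"
begin

definition relu_pow :: "nat \<Rightarrow> real \<Rightarrow> real" where
  "relu_pow p z = (max 0 z) ^ p"

definition G_kernel :: "nat \<Rightarrow> real \<Rightarrow> real \<Rightarrow> real" where
  "G_kernel p x y = (LINT z:{-1..1}|lborel. relu_pow p (z - x) * relu_pow p (z - y))"

definition K_op :: "nat \<Rightarrow> (real \<Rightarrow> real) \<Rightarrow> real \<Rightarrow> real" where
  "K_op p h x = (LINT y:{-1..1}|lborel. G_kernel p x y * h y)"

definition L2_interval :: "(real \<Rightarrow> real) set" where
  "L2_interval = {h. h \<in> borel_measurable lborel \<and> set_integrable lborel {-1..1} (\<lambda>x. (h x)^2)}"

definition is_eigenvalue_K :: "nat \<Rightarrow> real \<Rightarrow> bool" where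
  "is_eigenvalue_K p m \<longleftrightarrow>
     (\<exists>h \<in> L2_interval.
        \<not> (AE x in lborel. x \<in> {-1..1} \<longrightarrow> h x = 0) \<and>
        (AE x in lborel. x \<in> {-1..1} \<longrightarrow> K_op p h x = m * h x))"

end

theory Submission
  imports Defs
begin

(* Writing T h (z) = \<integral> ReLU^p(z - y) h(y) dy over [-1,1], the definition of G_p gives K_p = T* T,
   so <K_p h, g> = <T h, T g>: eigenvalues are nonnegative and eigenfunctions of distinct
   eigenvalues are orthogonal. Cut [-1,1] into N intervals [c_b, c_(b+1)] of length 2/N. Some
   nontrivial combination v of the first (p+1)N + 1 eigenfunctions satisfies the (p+1)N linear
   conditions \<integral>_[-1,c_b) y^l v(y) dy = 0 (b < N, l \<le> p). As ReLU^p(z - y) = (z - y)^p is a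
   polynomial of degree p in y for y \<le> z, for z in [c_b, c_(b+1)] the value T v (z) only depends
   on v on [c_b, z], and Cauchy-Schwarz yields |T v|^2 \<le> (2/N)^(2p+2) |v|^2. Orthogonality gives
   |T v|^2 = \<Sum> c_i^2 \<mu>_i |h_i|^2 \<ge> \<mu>_((p+1)N) |v|^2, hence \<mu>_((p+1)N) \<le> (2/N)^(2p+2),
   and monotonicity of \<mu> gives the rate. *)

lemma sum_sum_eq_diagonal:
  assumes "finite I" and "\<And>i j. i \<in> I \<Longrightarrow> j \<in> I \<Longrightarrow> i \<noteq> j \<Longrightarrow> g i j = 0"
  shows "(\<Sum>i\<in>I. \<Sum>j\<in>I. g i j) = (\<Sum>i\<in>I. g i i)"
proof (rule sum.cong[OF refl])
  fix i
  assume i: "i \<in> I"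
  have "(\<Sum>j\<in>I. g i j) = (\<Sum>j\<in>I. if j = i then g i i else 0)"
    by (rule sum.cong[OF refl]) (use assms(2) i in auto)
  also have "\<dots> = g i i"
    using assms(1) i by (simp add: sum.delta)
  finally show "(\<Sum>j\<in>I. g i j) = g i i" .
qed

lemma homogeneous_linear_system_nontrivial_solution:
  fixes a :: "'j \<Rightarrow> 'i \<Rightarrow> real"
  assumes "finite C" "finite I" "card C < card I"
  shows "\<exists>c. (\<exists>i\<in>I. c i \<noteq> 0) \<and> (\<forall>j\<in>C. (\<Sum>i\<in>I. a j i * c i) = 0)"
  using assms
proof (induction C arbitrary: I a rule: finite_induct)
  case empty
  then obtain i where "i \<in> I"
    by fastforce
  then show ?case
    by (intro exI[of _ "\<lambda>k. if k = i then 1 else 0"]) auto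
next
  case (insert j C)
  show ?case
  proof (cases "\<forall>i\<in>I. a j i = 0")
    case True
    then show ?thesis
      using insert.IH[of I a] insert.prems insert.hyps by auto
  next
    case False
    then obtain i0 where i0: "i0 \<in> I" "a j i0 \<noteq> 0"
      by auto
    define I' where "I' = I - {i0}"
    \<comment> \<open>Gaussian elimination of the unknown \<open>c i0\<close> by means of equation \<open>j\<close>.\<close>
    define a' where "a' = (\<lambda>k i. a k i - a k i0 * a j i / a j i0)"
    have "card C < card I'"
      using insert.prems insert.hyps i0 unfolding I'_def by auto
    then obtain c' where c': "\<exists>i\<in>I'. c' i \<noteq> 0" "\<forall>k\<in>C. (\<Sum>i\<in>I'. a' k i * c' i) = 0"
      using insert.IH[of I' a'] insert.prems unfolding I'_def by auto
    define c where "c = (\<lambda>i. if i = i0 then - (\<Sum>i\<in>I'. a j i * c' i) / a j i0 else c' i)"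
    have split: "(\<Sum>i\<in>I. f i * c i) = f i0 * c i0 + (\<Sum>i\<in>I'. f i * c' i)" for f
    proof -
      have "(\<Sum>i\<in>I. f i * c i) = f i0 * c i0 + (\<Sum>i\<in>I'. f i * c i)"
        unfolding I'_def using i0 insert.prems by (simp add: sum.remove)
      moreover have "(\<Sum>i\<in>I'. f i * c i) = (\<Sum>i\<in>I'. f i * c' i)"
        by (rule sum.cong) (auto simp: c_def I'_def)
      ultimately show ?thesis
        by simp
    qed
    have "(\<Sum>i\<in>I. a k i * c i) = 0" if "k \<in> C" for k
    proof -
      have "(\<Sum>i\<in>I'. a' k i * c' i) = (\<Sum>i\<in>I'. a k i * c' i) + a k i0 * c i0"
        unfolding a'_def c_def
        by (simp add: sum_subtractf sum_distrib_left algebra_simps sum_divide_distrib)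
      then show ?thesis
        using c'(2) that unfolding split by simp
    qed
    moreover have "(\<Sum>i\<in>I. a j i * c i) = 0"
      unfolding split using i0 by (simp add: c_def)
    moreover have "\<exists>i\<in>I. c i \<noteq> 0"
      using c' by (auto simp: c_def I'_def)
    ultimately show ?thesis
      by blast
  qed
qed

lemma set_integrable_sum:
  fixes f :: "'i \<Rightarrow> 'a \<Rightarrow> real"
  assumes "\<And>i. i \<in> I \<Longrightarrow> set_integrable M A (f i)"
  shows "set_integrable M A (\<lambda>x. \<Sum>i\<in>I. f i x)"
  using assms unfolding set_integrable_def
  by (simp add: sum_distrib_left Bochner_Integration.integrable_sum)

lemma set_integral_sum:
  fixes f :: "'i \<Rightarrow> 'a \<Rightarrow> real"
  assumes "\<And>i. i \<in> I \<Longrightarrow> set_integrable M A (f i)"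
  shows "(LINT x:A|M. (\<Sum>i\<in>I. f i x)) = (\<Sum>i\<in>I. LINT x:A|M. f i x)"
  using assms unfolding set_integrable_def set_lebesgue_integral_def
  by (simp add: sum_distrib_left Bochner_Integration.integral_sum)

lemma set_integrable_bounded_mult:
  fixes \<phi> f :: "real \<Rightarrow> real"
  assumes [measurable]: "A \<in> sets borel" "\<phi> \<in> borel_measurable borel" "f \<in> borel_measurable borel"
    and bound: "\<And>x. x \<in> A \<Longrightarrow> \<bar>\<phi> x\<bar> \<le> B" and f: "set_integrable lborel A f"
  shows "set_integrable lborel A (\<lambda>x. \<phi> x * f x)"
proof (rule set_integrable_bound[where f = "\<lambda>x. B * f x"])
  show "set_integrable lborel A (\<lambda>x. B * f x)"
    using f by simp
  show "set_borel_measurable lborel A (\<lambda>x. \<phi> x * f x)"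
    unfolding set_borel_measurable_def by measurable
  have "\<bar>\<phi> x\<bar> * \<bar>f x\<bar> \<le> \<bar>B\<bar> * \<bar>f x\<bar>" if "x \<in> A" for x
    using bound[OF that] by (intro mult_right_mono) auto
  then show "AE x in lborel. x \<in> A \<longrightarrow> norm (\<phi> x * f x) \<le> norm (B * f x)"
    by (auto simp: abs_mult)
qed

lemma set_integrable_bounded_Icc:
  fixes \<phi> :: "real \<Rightarrow> real"
  assumes "\<phi> \<in> borel_measurable borel" and "\<And>x. x \<in> {a..b} \<Longrightarrow> \<bar>\<phi> x\<bar> \<le> B"
  shows "set_integrable lborel {a..b} \<phi>"
proof -
  have "set_integrable lborel {a..b} (\<lambda>x. \<phi> x * 1)"
    using assms by (intro set_integrable_bounded_mult borel_integrable_atLeastAtMost') auto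
  then show ?thesis
    by simp
qed

lemma set_integral_Icc_partition:
  fixes f :: "real \<Rightarrow> real" and t :: "nat \<Rightarrow> real"
  assumes f: "set_integrable lborel {t 0..t N} f" and t: "\<And>b. b < N \<Longrightarrow> t b \<le> t (Suc b)"
  shows "(LINT x:{t 0..t N}|lborel. f x) = (\<Sum>b<N. LINT x:{t b..t (Suc b)}|lborel. f x)"
proof -
  have t_mono: "t a \<le> t b" if "a \<le> b" "b \<le> N" for a b
    using that t by (induction b rule: dec_induct) (auto intro: order_trans)
  have sub: "set_integrable lborel {t a..t b} f" if "a \<le> b" "b \<le> N" for a b
    using that t_mono by (intro set_integrable_subset[OF f]) auto
  have "integral {t 0..t k} f = (\<Sum>b<k. integral {t b..t (Suc b)} f)" if "k \<le> N" for k
    using that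
  proof (induction k)
    case (Suc k)
    have "f integrable_on {t 0..t (Suc k)}"
      using set_borel_integral_eq_integral(1)[OF sub] Suc.prems by simp
    then have "integral {t 0..t k} f + integral {t k..t (Suc k)} f = integral {t 0..t (Suc k)} f"
      using Suc.prems t_mono t by (intro Henstock_Kurzweil_Integration.integral_combine) auto
    then show ?case
      using Suc by simp
  qed simp
  then show ?thesis
    using set_borel_integral_eq_integral(2)[OF sub] by simp
qed

lemma set_integral_abs_square_le:
  fixes v :: "real \<Rightarrow> real"
  assumes cd: "c < d" and abs_int: "set_integrable lborel {c..d} (\<lambda>y. \<bar>v y\<bar>)"
    and square_int: "set_integrable lborel {c..d} (\<lambda>y. v y * v y)"
  shows "(LINT y:{c..d}|lborel. \<bar>v y\<bar>)\<^sup>2 \<le> (d - c) * (LINT y:{c..d}|lborel. v y * v y)"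
proof -
  define A where "A = (LINT y:{c..d}|lborel. \<bar>v y\<bar>)"
  define S where "S = (LINT y:{c..d}|lborel. v y * v y)"
  define t where "t = A / (d - c)"
  have "0 \<le> (LINT y:{c..d}|lborel. (\<bar>v y\<bar> - t) * (\<bar>v y\<bar> - t))"
    unfolding set_lebesgue_integral_def
    by (intro Bochner_Integration.integral_nonneg) (auto simp: indicator_def)
  also have "\<dots> = (LINT y:{c..d}|lborel. (v y * v y - 2 * t * \<bar>v y\<bar>) + t * t)"
    by (simp add: algebra_simps abs_mult_self_eq)
  also have "\<dots> = S - 2 * t * A + t * t * (d - c)"
    using abs_int square_int cd
    by (simp add: set_integral_const borel_integrable_atLeastAtMost' S_def A_def)
  also have "\<dots> = S - A * A / (d - c)"
    using cd by (simp add: t_def power2_eq_square divide_simps)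
  finally show ?thesis
    using cd by (simp add: A_def S_def field_simps power2_eq_square)
qed

lemma integrable_bounded_kernel_product:
  fixes a b :: "real \<Rightarrow> real" and k :: "real \<Rightarrow> real \<Rightarrow> real"
  assumes [measurable]: "A \<in> sets borel" "a \<in> borel_measurable borel" "b \<in> borel_measurable borel"
    "case_prod k \<in> borel_measurable (borel \<Otimes>\<^sub>M borel)"
    and a: "set_integrable lborel A a" and b: "set_integrable lborel A b"
    and bound: "\<And>y z. y \<in> A \<Longrightarrow> z \<in> A \<Longrightarrow> \<bar>k y z\<bar> \<le> C"
  shows "integrable (lborel \<Otimes>\<^sub>M lborel)
    (\<lambda>(y, z). indicator A y * indicator A z * (a y * k y z * b z) :: real)"
proof -
  define I where "I = (indicator A :: real \<Rightarrow> real)"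
  have [measurable]: "I \<in> borel_measurable borel"
    unfolding I_def by measurable
  have abs_a: "integrable lborel (\<lambda>y. I y * \<bar>a y\<bar>)" and abs_b: "integrable lborel (\<lambda>y. I y * \<bar>b y\<bar>)"
    using set_integrable_abs[OF a] set_integrable_abs[OF b]
    unfolding set_integrable_def I_def by simp_all
  define Q where "Q = (\<lambda>(y, z). \<bar>C\<bar> * (I y * \<bar>a y\<bar>) * (I z * \<bar>b z\<bar>))"
  have majorant: "integrable (lborel \<Otimes>\<^sub>M lborel) Q"
  proof (rule lborel_pair.Fubini_integrable)
    show "Q \<in> borel_measurable (lborel \<Otimes>\<^sub>M lborel)"
      unfolding Q_def by measurable
    have "(\<lambda>y. \<integral>z. norm (Q (y, z)) \<partial>lborel)
        = (\<lambda>y. (\<bar>C\<bar> * (I y * \<bar>a y\<bar>)) * (\<integral>z. I z * \<bar>b z\<bar> \<partial>lborel))"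
      unfolding Q_def I_def by (auto simp: abs_mult indicator_def)
    then show "integrable lborel (\<lambda>y. \<integral>z. norm (Q (y, z)) \<partial>lborel)"
      using abs_a by simp
    show "AE y in lborel. integrable lborel (\<lambda>z. Q (y, z))"
      unfolding Q_def using abs_b by simp
  qed
  show ?thesis
    unfolding I_def[symmetric]
  proof (rule Bochner_Integration.integrable_bound[OF majorant])
    have "\<bar>I y * I z * (a y * k y z * b z)\<bar> \<le> \<bar>C\<bar> * (I y * \<bar>a y\<bar>) * (I z * \<bar>b z\<bar>)" for y z
    proof (cases "y \<in> A \<and> z \<in> A")
      case True
      then have "\<bar>a y\<bar> * \<bar>k y z\<bar> * \<bar>b z\<bar> \<le> \<bar>a y\<bar> * \<bar>C\<bar> * \<bar>b z\<bar>"
        using bound by (intro mult_right_mono mult_left_mono) fastforce+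
      then show ?thesis
        using True by (simp add: I_def abs_mult mult_ac)
    qed (auto simp: I_def)
    then show "AE x in lborel \<Otimes>\<^sub>M lborel.
        norm ((\<lambda>(y, z). I y * I z * (a y * k y z * b z)) x) \<le> norm (Q x)"
      by (auto simp: Q_def I_def)
  qed measurable
qed

lemma set_integral_swap_bounded_kernel:
  fixes a b :: "real \<Rightarrow> real" and k :: "real \<Rightarrow> real \<Rightarrow> real"
  assumes [measurable]: "A \<in> sets borel" "a \<in> borel_measurable borel" "b \<in> borel_measurable borel"
    "case_prod k \<in> borel_measurable (borel \<Otimes>\<^sub>M borel)"
    and a: "set_integrable lborel A a" and b: "set_integrable lborel A b"
    and bound: "\<And>y z. y \<in> A \<Longrightarrow> z \<in> A \<Longrightarrow> \<bar>k y z\<bar> \<le> C"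
  shows "(LINT y:A|lborel. a y * (LINT z:A|lborel. k y z * b z))
       = (LINT z:A|lborel. b z * (LINT y:A|lborel. k y z * a y))"
proof -
  define I where "I = (indicator A :: real \<Rightarrow> real)"
  define F where "F = (\<lambda>y z. I y * I z * (a y * k y z * b z))"
  have "(\<integral>y. (\<integral>z. F y z \<partial>lborel) \<partial>lborel) = (\<integral>z. (\<integral>y. F y z \<partial>lborel) \<partial>lborel)"
    using lborel_pair.Fubini_integral[OF integrable_bounded_kernel_product[OF assms]]
    by (simp add: F_def I_def)
  moreover have "(\<integral>z. F y z \<partial>lborel) = (I y * a y) * (\<integral>z. I z * (k y z * b z) \<partial>lborel)" for y
  proof -
    have "(\<lambda>z. F y z) = (\<lambda>z. (I y * a y) * (I z * (k y z * b z)))"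
      by (simp add: F_def fun_eq_iff mult_ac)
    then show ?thesis
      by (simp only: integral_mult_right_zero)
  qed
  moreover have "(\<integral>y. F y z \<partial>lborel) = (I z * b z) * (\<integral>y. I y * (k y z * a y) \<partial>lborel)" for z
  proof -
    have "(\<lambda>y. F y z) = (\<lambda>y. (I z * b z) * (I y * (k y z * a y)))"
      by (simp add: F_def fun_eq_iff mult_ac)
    then show ?thesis
      by (simp only: integral_mult_right_zero)
  qed
  ultimately show ?thesis
    unfolding set_lebesgue_integral_def I_def by (simp add: mult_ac)
qed

lemma L2_interval_measurable [measurable_dest]: "h \<in> L2_interval \<Longrightarrow> h \<in> borel_measurable borel"
  unfolding L2_interval_def by auto

lemma L2_interval_set_integrable_square:
  "h \<in> L2_interval \<Longrightarrow> set_integrable lborel {-1..1} (\<lambda>x. h x * h x)"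
  unfolding L2_interval_def by (simp add: power2_eq_square)

lemma bounded_in_L2_interval:
  fixes \<phi> :: "real \<Rightarrow> real"
  assumes [measurable]: "\<phi> \<in> borel_measurable borel" and bound: "\<And>x. x \<in> {-1..1} \<Longrightarrow> \<bar>\<phi> x\<bar> \<le> B"
  shows "\<phi> \<in> L2_interval"
proof -
  have "set_integrable lborel {-1..1} (\<lambda>x. \<phi> x * \<phi> x)"
    using set_integrable_bounded_Icc[OF _ bound] by (intro set_integrable_bounded_mult[OF _ _ _ bound]) auto
  then show ?thesis
    unfolding L2_interval_def by (simp add: power2_eq_square)
qed

lemma L2_interval_set_integrable_mult:
  assumes "f \<in> L2_interval" "g \<in> L2_interval"
  shows "set_integrable lborel {-1..1} (\<lambda>x. f x * g x)"
proof (rule set_integrable_bound[where f = "\<lambda>x. f x * f x + g x * g x"])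
  show "set_integrable lborel {-1..1} (\<lambda>x. f x * f x + g x * g x)"
    using assms by (intro set_integral_add L2_interval_set_integrable_square)
  show "set_borel_measurable lborel {-1..1} (\<lambda>x. f x * g x)"
    using assms unfolding set_borel_measurable_def by measurable
  have "\<bar>s * t\<bar> \<le> s * s + t * t" for s t :: real
  proof -
    have "2 * (\<bar>s\<bar> * \<bar>t\<bar>) \<le> s * s + t * t"
      using sum_squares_bound[of "\<bar>s\<bar>" "\<bar>t\<bar>"] by (simp add: power2_eq_square mult.assoc)
    moreover have "0 \<le> \<bar>s\<bar> * \<bar>t\<bar>"
      by simp
    ultimately show ?thesis
      unfolding abs_mult by linarith
  qed
  then show "AE x in lborel. x \<in> {-1..1} \<longrightarrow> norm (f x * g x) \<le> norm (f x * f x + g x * g x)"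
    by auto
qed

lemma L2_interval_set_integrable:
  assumes "h \<in> L2_interval"
  shows "set_integrable lborel {-1..1} h"
  using L2_interval_set_integrable_mult[OF assms bounded_in_L2_interval[of "\<lambda>_. 1" 1]] by simp

lemma set_integral_square_pos:
  assumes h: "h \<in> L2_interval" and nonzero: "\<not> (AE x in lborel. x \<in> {-1..1} \<longrightarrow> h x = 0)"
  shows "(LINT x:{-1..1}|lborel. h x * h x) > 0"
proof -
  have [measurable]: "h \<in> borel_measurable borel"
    using h by auto
  have int: "integrable lborel (\<lambda>x. indicator {-1..1} x * (h x * h x))"
    using L2_interval_set_integrable_square[OF h] unfolding set_integrable_def by simp
  have "(LINT x:{-1..1}|lborel. h x * h x) \<noteq> 0"
  proof
    assume "(LINT x:{-1..1}|lborel. h x * h x) = 0"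
    then have "AE x in lborel. indicator {-1..1} x * (h x * h x) = 0"
      using integral_nonneg_eq_0_iff_AE[OF int]
      by (auto simp: set_lebesgue_integral_def indicator_def)
    then have "AE x in lborel. x \<in> {-1..1} \<longrightarrow> h x = 0"
      by eventually_elim (auto simp: indicator_def)
    with nonzero show False
      by blast
  qed
  moreover have "(LINT x:{-1..1}|lborel. h x * h x) \<ge> 0"
    unfolding set_lebesgue_integral_def
    by (intro Bochner_Integration.integral_nonneg) (auto simp: indicator_def)
  ultimately show ?thesis
    by simp
qed

lemma set_integral_combination_square_expand:
  fixes F :: "'i \<Rightarrow> real \<Rightarrow> real"
  assumes "\<And>i. i \<in> I \<Longrightarrow> F i \<in> L2_interval"
  shows "set_integrable lborel {-1..1} (\<lambda>x. (\<Sum>i\<in>I. c i * F i x) * (\<Sum>i\<in>I. c i * F i x))"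
    and "(LINT x:{-1..1}|lborel. (\<Sum>i\<in>I. c i * F i x) * (\<Sum>i\<in>I. c i * F i x))
         = (\<Sum>i\<in>I. \<Sum>j\<in>I. c i * c j * (LINT x:{-1..1}|lborel. F i x * F j x))"
proof -
  have expand: "(\<Sum>i\<in>I. c i * F i x) * (\<Sum>i\<in>I. c i * F i x)
      = (\<Sum>i\<in>I. \<Sum>j\<in>I. c i * c j * (F i x * F j x))" for x
    by (simp add: sum_product mult_ac)
  have entry: "set_integrable lborel {-1..1} (\<lambda>x. c i * c j * (F i x * F j x))"
    if "i \<in> I" "j \<in> I" for i j
    using L2_interval_set_integrable_mult[OF assms[OF that(1)] assms[OF that(2)]] by simp
  then have row: "set_integrable lborel {-1..1} (\<lambda>x. \<Sum>j\<in>I. c i * c j * (F i x * F j x))"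
    if "i \<in> I" for i
    using that by (intro set_integrable_sum) auto
  then show "set_integrable lborel {-1..1} (\<lambda>x. (\<Sum>i\<in>I. c i * F i x) * (\<Sum>i\<in>I. c i * F i x))"
    unfolding expand by (rule set_integrable_sum)
  show "(LINT x:{-1..1}|lborel. (\<Sum>i\<in>I. c i * F i x) * (\<Sum>i\<in>I. c i * F i x))
      = (\<Sum>i\<in>I. \<Sum>j\<in>I. c i * c j * (LINT x:{-1..1}|lborel. F i x * F j x))"
    unfolding expand using row entry
    by (simp add: set_integral_sum[OF row] set_integral_sum[OF entry] cong: sum.cong)
qed

lemma L2_interval_combination:
  fixes F :: "'i \<Rightarrow> real \<Rightarrow> real"
  assumes "\<And>i. i \<in> I \<Longrightarrow> F i \<in> L2_interval"
  shows "(\<lambda>x. \<Sum>i\<in>I. c i * F i x) \<in> L2_interval"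
proof -
  have "(\<lambda>x. \<Sum>i\<in>I. c i * F i x) \<in> borel_measurable borel"
    using assms by (intro borel_measurable_sum borel_measurable_times borel_measurable_const) auto
  then show ?thesis
    using set_integral_combination_square_expand(1)[OF assms]
    unfolding L2_interval_def by (simp add: power2_eq_square)
qed

section \<open>Factorization of the operator\<close>

lemma relu_pow_measurable [measurable]: "relu_pow p \<in> borel_measurable borel"
  unfolding relu_pow_def by measurable

lemma abs_relu_pow_le: "z \<le> B \<Longrightarrow> \<bar>relu_pow p z\<bar> \<le> (max 0 B) ^ p"
  unfolding relu_pow_def by (auto intro!: power_mono)

lemma abs_relu_pow_diff_le: "x \<in> {-1..1} \<Longrightarrow> y \<in> {-1..1} \<Longrightarrow> \<bar>relu_pow p (x - y)\<bar> \<le> 2 ^ p"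
  using abs_relu_pow_le[of "x - y" 2 p] by auto

definition relu_transform :: "nat \<Rightarrow> (real \<Rightarrow> real) \<Rightarrow> real \<Rightarrow> real" where
  "relu_transform p h z = (LINT y:{-1..1}|lborel. relu_pow p (z - y) * h y)"

lemma relu_transform_measurable [measurable]:
  assumes [measurable]: "h \<in> borel_measurable borel"
  shows "relu_transform p h \<in> borel_measurable borel"
  unfolding relu_transform_def set_lebesgue_integral_def
  by (rule lborel.borel_measurable_lebesgue_integral) measurable

lemma set_integrable_relu_pow_mult:
  assumes "h \<in> L2_interval"
  shows "set_integrable lborel {-1..1} (\<lambda>y. relu_pow p (z - y) * h y)"
proof (rule set_integrable_bounded_mult[where B = "(max 0 (z + 1)) ^ p"])
  show "set_integrable lborel {-1..1} h"
    using L2_interval_set_integrable[OF assms] .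
qed (use assms abs_relu_pow_le in auto)

lemma abs_relu_transform_le:
  assumes h: "h \<in> L2_interval" and z: "z \<in> {-1..1}"
  shows "\<bar>relu_transform p h z\<bar> \<le> 2 ^ p * (LINT y:{-1..1}|lborel. \<bar>h y\<bar>)"
proof -
  have int: "set_integrable lborel {-1..1} (\<lambda>y. relu_pow p (z - y) * h y)"
    using set_integrable_relu_pow_mult[OF h] .
  have "\<bar>relu_transform p h z\<bar> \<le> (LINT y:{-1..1}|lborel. \<bar>relu_pow p (z - y) * h y\<bar>)"
    unfolding relu_transform_def using set_integral_norm_bound[OF int] by simp
  also have "\<dots> \<le> (LINT y:{-1..1}|lborel. 2 ^ p * \<bar>h y\<bar>)"
    using set_integrable_abs[OF int] set_integrable_abs[OF L2_interval_set_integrable[OF h]]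
      abs_relu_pow_diff_le[OF z]
    by (intro set_integral_mono) (auto simp: abs_mult intro!: mult_right_mono)
  finally show ?thesis
    by simp
qed

lemma relu_transform_in_L2_interval: "h \<in> L2_interval \<Longrightarrow> relu_transform p h \<in> L2_interval"
  by (rule bounded_in_L2_interval[OF _ abs_relu_transform_le]) auto

lemma relu_transform_combination:
  fixes F :: "'i \<Rightarrow> real \<Rightarrow> real"
  assumes "\<And>i. i \<in> I \<Longrightarrow> F i \<in> L2_interval"
  shows "relu_transform p (\<lambda>x. \<Sum>i\<in>I. c i * F i x) z = (\<Sum>i\<in>I. c i * relu_transform p (F i) z)"
proof -
  have "relu_transform p (\<lambda>x. \<Sum>i\<in>I. c i * F i x) z
      = (LINT y:{-1..1}|lborel. (\<Sum>i\<in>I. c i * (relu_pow p (z - y) * F i y)))"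
    unfolding relu_transform_def by (simp add: sum_distrib_left mult_ac)
  also have "\<dots> = (\<Sum>i\<in>I. c i * relu_transform p (F i) z)"
    using set_integrable_relu_pow_mult[OF assms]
    by (simp add: set_integral_sum relu_transform_def)
  finally show ?thesis .
qed

definition relu_transform_adjoint :: "nat \<Rightarrow> (real \<Rightarrow> real) \<Rightarrow> real \<Rightarrow> real" where
  "relu_transform_adjoint p g x = (LINT z:{-1..1}|lborel. relu_pow p (z - x) * g z)"

lemma relu_transform_adjoint_measurable [measurable]:
  assumes [measurable]: "g \<in> borel_measurable borel"
  shows "relu_transform_adjoint p g \<in> borel_measurable borel"
  unfolding relu_transform_adjoint_def set_lebesgue_integral_def
  by (rule lborel.borel_measurable_lebesgue_integral) measurable

lemma set_integral_relu_transform_adjoint_mult: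
  assumes f: "f \<in> L2_interval" and g: "g \<in> L2_interval"
  shows "(LINT x:{-1..1}|lborel. relu_transform_adjoint p g x * f x)
       = (LINT z:{-1..1}|lborel. g z * relu_transform p f z)"
proof -
  have "(LINT x:{-1..1}|lborel. relu_transform_adjoint p g x * f x)
      = (LINT x:{-1..1}|lborel. f x * (LINT z:{-1..1}|lborel. relu_pow p (z - x) * g z))"
    by (simp add: relu_transform_adjoint_def mult.commute)
  also have "\<dots> = (LINT z:{-1..1}|lborel. g z * (LINT y:{-1..1}|lborel. relu_pow p (z - y) * f y))"
  proof (rule set_integral_swap_bounded_kernel[where C = "2 ^ p"])
    show "set_integrable lborel {-1..1} f" "set_integrable lborel {-1..1} g"
      using f g by (simp_all add: L2_interval_set_integrable)
    show "(\<lambda>(y, z). relu_pow p (z - y)) \<in> borel_measurable (borel \<Otimes>\<^sub>M borel)"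
      by measurable
  qed (use f g abs_relu_pow_diff_le in auto)
  finally show ?thesis
    unfolding relu_transform_def .
qed

lemma K_op_eq_adjoint_relu_transform:
  assumes h: "h \<in> L2_interval" and x: "x \<in> {-1..1}"
  shows "K_op p h x = relu_transform_adjoint p (relu_transform p h) x"
proof -
  have "K_op p h x = (LINT y:{-1..1}|lborel.
      h y * (LINT z:{-1..1}|lborel. relu_pow p (z - y) * relu_pow p (z - x)))"
    unfolding K_op_def G_kernel_def by (simp add: mult.commute)
  also have "\<dots> = (LINT z:{-1..1}|lborel.
      relu_pow p (z - x) * (LINT y:{-1..1}|lborel. relu_pow p (z - y) * h y))"
  proof (rule set_integral_swap_bounded_kernel[where C = "2 ^ p"])
    show "set_integrable lborel {-1..1} h"
      using L2_interval_set_integrable[OF h] .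
    show "set_integrable lborel {-1..1} (\<lambda>z. relu_pow p (z - x))"
      using x abs_relu_pow_diff_le by (intro set_integrable_bounded_Icc) auto
    show "(\<lambda>(y, z). relu_pow p (z - y)) \<in> borel_measurable (borel \<Otimes>\<^sub>M borel)"
      by measurable
  qed (use h abs_relu_pow_diff_le in auto)
  finally show ?thesis
    unfolding relu_transform_def relu_transform_adjoint_def .
qed

section \<open>Locality of the transform on functions with vanishing moments\<close>

lemma set_integrable_power_mult:
  fixes v :: "real \<Rightarrow> real"
  assumes "set_integrable lborel A v" "A \<subseteq> {-1..1}"
    and [measurable]: "A \<in> sets borel" "v \<in> borel_measurable borel"
  shows "set_integrable lborel A (\<lambda>y. y ^ l * v y)"
proof (rule set_integrable_bounded_mult[where B = 1])
  show "\<bar>y ^ l\<bar> \<le> 1" if "y \<in> A" for y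
    using subsetD[OF assms(2) that] by (auto simp: power_abs intro!: power_le_one)
qed (use assms in auto)

lemma set_integral_diff_power_eq_0:
  fixes v :: "real \<Rightarrow> real"
  assumes [measurable]: "A \<in> sets borel" "v \<in> borel_measurable borel"
    and v: "set_integrable lborel A v" and A: "A \<subseteq> {-1..1}"
    and moments: "\<And>l. l \<le> p \<Longrightarrow> (LINT y:A|lborel. y ^ l * v y) = 0"
  shows "(LINT y:A|lborel. (z - y) ^ p * v y) = 0"
proof -
  have "(z - y) ^ p * v y = (\<Sum>l\<le>p. (of_nat (p choose l) * (-1) ^ l * z ^ (p - l)) * (y ^ l * v y))"
    for y
    using binomial_ring[of "-y" z p]
    by (simp add: sum_distrib_left sum_distrib_right power_minus[of y] mult_ac)
  moreover have "set_integrable lborel A (\<lambda>y. y ^ l * v y)" for l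
    using v A by (rule set_integrable_power_mult) simp_all
  ultimately show ?thesis
    using moments by (simp add: set_integral_sum)
qed

lemma relu_transform_eq_local:
  fixes v :: "real \<Rightarrow> real"
  assumes p: "p \<ge> 1" and v: "v \<in> L2_interval" and cz: "-1 \<le> c" "c \<le> z" "z \<le> 1"
    and moments: "\<And>l. l \<le> p \<Longrightarrow> (LINT y:{-1..<c}|lborel. y ^ l * v y) = 0"
  shows "relu_transform p v z = (LINT y:{c..z}|lborel. (z - y) ^ p * v y)"
proof -
  have [measurable]: "v \<in> borel_measurable borel"
    using v by auto
  have int: "set_integrable lborel {-1..1} (\<lambda>y. (z - y) ^ p * v y)"
    using cz L2_interval_set_integrable[OF v]
    by (intro set_integrable_bounded_mult[where B = "2 ^ p"]) (auto simp: power_abs intro!: power_mono)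
  have int_left: "set_integrable lborel {-1..<c} (\<lambda>y. (z - y) ^ p * v y)"
    and int_block: "set_integrable lborel {c..z} (\<lambda>y. (z - y) ^ p * v y)"
    using cz by (auto intro: set_integrable_subset[OF int])
  have "indicator {-1..1} y *\<^sub>R (relu_pow p (z - y) * v y) =
      indicator {-1..<c} y *\<^sub>R ((z - y) ^ p * v y) + indicator {c..z} y *\<^sub>R ((z - y) ^ p * v y)" for y
    using p cz by (auto simp: indicator_def relu_pow_def max_def)
  then have "relu_transform p v z
      = (LINT y:{-1..<c}|lborel. (z - y) ^ p * v y) + (LINT y:{c..z}|lborel. (z - y) ^ p * v y)"
    unfolding relu_transform_def set_lebesgue_integral_def
    using int_left int_block unfolding set_integrable_def
    by (simp only:) (rule Bochner_Integration.integral_add)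
  also have "(LINT y:{-1..<c}|lborel. (z - y) ^ p * v y) = 0"
  proof (rule set_integral_diff_power_eq_0)
    show "set_integrable lborel {-1..<c} v"
      using cz by (intro set_integrable_subset[OF L2_interval_set_integrable[OF v]]) auto
  qed (use cz moments in auto)
  finally show ?thesis
    by simp
qed

lemma relu_transform_square_le_block:
  fixes v :: "real \<Rightarrow> real"
  assumes p: "p \<ge> 1" and v: "v \<in> L2_interval" and cd: "-1 \<le> c" "c < d" "d \<le> 1" and z: "z \<in> {c..d}"
    and moments: "\<And>l. l \<le> p \<Longrightarrow> (LINT y:{-1..<c}|lborel. y ^ l * v y) = 0"
  shows "(relu_transform p v z)\<^sup>2 \<le> (d - c) ^ (2 * p + 1) * (LINT y:{c..d}|lborel. v y * v y)"
proof -
  have [measurable]: "v \<in> borel_measurable borel"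
    using v by auto
  have abs_v: "set_integrable lborel {c..d} (\<lambda>y. \<bar>v y\<bar>)"
    using cd by (intro set_integrable_subset[OF set_integrable_abs[OF L2_interval_set_integrable[OF v]]]) auto
  have int: "set_integrable lborel {c..z} (\<lambda>y. (z - y) ^ p * v y)"
    using z cd set_integrable_subset[OF L2_interval_set_integrable[OF v], of "{c..z}"]
    by (intro set_integrable_bounded_mult[where B = "2 ^ p"]) (auto simp: power_abs intro!: power_mono)
  have "\<bar>relu_transform p v z\<bar> \<le> (LINT y:{c..z}|lborel. \<bar>(z - y) ^ p * v y\<bar>)"
    using relu_transform_eq_local[OF p v, of c z] set_integral_norm_bound[OF int] cd z moments by simp
  also have "\<dots> \<le> (LINT y:{c..d}|lborel. (d - c) ^ p * \<bar>v y\<bar>)"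
    unfolding set_lebesgue_integral_def
  proof (rule integral_mono)
    show "integrable lborel (\<lambda>y. indicator {c..z} y *\<^sub>R \<bar>(z - y) ^ p * v y\<bar>)"
      using set_integrable_abs[OF int] unfolding set_integrable_def .
    show "integrable lborel (\<lambda>y. indicator {c..d} y *\<^sub>R ((d - c) ^ p * \<bar>v y\<bar>))"
      using set_integrable_mult_right[OF abs_v] unfolding set_integrable_def .
    have "\<bar>z - y\<bar> ^ p \<le> (d - c) ^ p" if "y \<in> {c..z}" for y
      using that z by (intro power_mono) auto
    then show "indicator {c..z} y *\<^sub>R \<bar>(z - y) ^ p * v y\<bar>
        \<le> indicator {c..d} y *\<^sub>R ((d - c) ^ p * \<bar>v y\<bar>)" for y
      using z cd by (auto simp: indicator_def abs_mult power_abs intro!: mult_right_mono)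
  qed
  finally have "\<bar>relu_transform p v z\<bar> \<le> (d - c) ^ p * (LINT y:{c..d}|lborel. \<bar>v y\<bar>)"
    by simp
  then have "(relu_transform p v z)\<^sup>2 \<le> (d - c) ^ (2 * p) * (LINT y:{c..d}|lborel. \<bar>v y\<bar>)\<^sup>2"
    using power_mono[of _ _ 2] by (fastforce simp: power_mult_distrib power_mult mult.commute)
  also have "\<dots> \<le> (d - c) ^ (2 * p) * ((d - c) * (LINT y:{c..d}|lborel. v y * v y))"
    using set_integral_abs_square_le[OF cd(2) abs_v] cd v
      set_integrable_subset[OF L2_interval_set_integrable_square[OF v], of "{c..d}"]
    by (intro mult_left_mono) auto
  finally show ?thesis
    by (simp add: mult_ac)
qed

lemma set_integral_relu_transform_square_le_block:
  fixes v :: "real \<Rightarrow> real"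
  assumes p: "p \<ge> 1" and v: "v \<in> L2_interval" and cd: "-1 \<le> c" "c < d" "d \<le> 1"
    and moments: "\<And>l. l \<le> p \<Longrightarrow> (LINT y:{-1..<c}|lborel. y ^ l * v y) = 0"
  shows "(LINT z:{c..d}|lborel. (relu_transform p v z)\<^sup>2)
    \<le> (d - c) ^ (2 * p + 2) * (LINT y:{c..d}|lborel. v y * v y)"
proof -
  let ?E = "LINT y:{c..d}|lborel. v y * v y"
  have "(LINT z:{c..d}|lborel. (relu_transform p v z)\<^sup>2) \<le> (LINT z:{c..d}|lborel. (d - c) ^ (2 * p + 1) * ?E)"
  proof (rule set_integral_mono)
    have "set_integrable lborel {c..d} (\<lambda>z. relu_transform p v z * relu_transform p v z)"
      using cd by (intro set_integrable_subset[OF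
          L2_interval_set_integrable_square[OF relu_transform_in_L2_interval[OF v]]]) auto
    then show "set_integrable lborel {c..d} (\<lambda>z. (relu_transform p v z)\<^sup>2)"
      by (simp add: power2_eq_square)
    show "(relu_transform p v z)\<^sup>2 \<le> (d - c) ^ (2 * p + 1) * ?E" if "z \<in> {c..d}" for z
      using relu_transform_square_le_block[OF p v cd that moments] .
  qed (rule borel_integrable_atLeastAtMost', simp)
  also have "\<dots> = (d - c) * ((d - c) ^ (2 * p + 1) * ?E)"
    using cd by (simp add: set_integral_const)
  finally show ?thesis
    by (simp add: mult.assoc)
qed

definition partition_point :: "nat \<Rightarrow> nat \<Rightarrow> real" where
  "partition_point N b = -1 + 2 * real b / real N"

lemma partition_point_mono: "N \<ge> 1 \<Longrightarrow> b \<le> b' \<Longrightarrow> partition_point N b \<le> partition_point N b'"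
  unfolding partition_point_def by (auto intro!: divide_right_mono)

lemma partition_point_bounds:
  "N \<ge> 1 \<Longrightarrow> b \<le> N \<Longrightarrow> partition_point N b \<in> {-1..1}"
  using partition_point_mono[of N 0 b] partition_point_mono[of N b N]
  by (auto simp: partition_point_def)

lemma partition_point_Suc: "N \<ge> 1 \<Longrightarrow> partition_point N (Suc b) = partition_point N b + 2 / real N"
  unfolding partition_point_def by (simp add: field_simps)

lemma relu_transform_norm_le:
  fixes v :: "real \<Rightarrow> real"
  assumes p: "p \<ge> 1" and v: "v \<in> L2_interval" and N: "N \<ge> 1"
    and moments: "\<And>b l. b < N \<Longrightarrow> l \<le> p \<Longrightarrow>
      (LINT y:{-1..<partition_point N b}|lborel. y ^ l * v y) = 0"
  shows "(LINT z:{-1..1}|lborel. (relu_transform p v z)\<^sup>2)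
    \<le> (2 / real N) ^ (2 * p + 2) * (LINT z:{-1..1}|lborel. v z * v z)"
proof -
  let ?t = "partition_point N" and ?\<delta> = "2 / real N"
  have ends: "?t 0 = -1" "?t N = 1"
    using N by (simp_all add: partition_point_def)
  have partition: "(LINT x:{-1..1}|lborel. f x) = (\<Sum>b<N. LINT x:{?t b..?t (Suc b)}|lborel. f x)"
    if "set_integrable lborel {-1..1} f" for f :: "real \<Rightarrow> real"
    using set_integral_Icc_partition[of ?t N f] that partition_point_mono[OF N]
    unfolding ends by simp
  have block_bound: "(LINT z:{?t b..?t (Suc b)}|lborel. (relu_transform p v z)\<^sup>2)
      \<le> ?\<delta> ^ (2 * p + 2) * (LINT y:{?t b..?t (Suc b)}|lborel. v y * v y)" if "b < N" for b
  proof -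
    have step: "?t (Suc b) - ?t b = ?\<delta>"
      using partition_point_Suc[OF N] by simp
    moreover have "0 < ?\<delta>"
      using N by simp
    ultimately have "?t b < ?t (Suc b)"
      by linarith
    then have "(LINT z:{?t b..?t (Suc b)}|lborel. (relu_transform p v z)\<^sup>2)
        \<le> (?t (Suc b) - ?t b) ^ (2 * p + 2) * (LINT y:{?t b..?t (Suc b)}|lborel. v y * v y)"
      using partition_point_bounds[OF N, of b] partition_point_bounds[OF N, of "Suc b"] that
      by (intro set_integral_relu_transform_square_le_block[OF p v _ _ _ moments[OF that]]) auto
    then show ?thesis
      unfolding step .
  qed
  have "(LINT z:{-1..1}|lborel. (relu_transform p v z)\<^sup>2)
      = (\<Sum>b<N. LINT z:{?t b..?t (Suc b)}|lborel. (relu_transform p v z)\<^sup>2)"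
    using L2_interval_set_integrable_square[OF relu_transform_in_L2_interval[OF v]]
    by (intro partition) (simp add: power2_eq_square)
  also have "\<dots> \<le> (\<Sum>b<N. ?\<delta> ^ (2 * p + 2) * (LINT y:{?t b..?t (Suc b)}|lborel. v y * v y))"
    using block_bound by (intro sum_mono) simp
  also have "\<dots> = ?\<delta> ^ (2 * p + 2) * (LINT z:{-1..1}|lborel. v z * v z)"
    using partition[OF L2_interval_set_integrable_square[OF v]] by (simp add: sum_distrib_left)
  finally show ?thesis .
qed

lemma exists_combination_with_vanishing_moments:
  fixes F :: "nat \<Rightarrow> real \<Rightarrow> real"
  assumes F: "\<And>i. F i \<in> L2_interval" and N: "N \<ge> 1"
  obtains c where "\<exists>i\<le>(p + 1) * N. c i \<noteq> 0"
    and "\<And>b l. b < N \<Longrightarrow> l \<le> p \<Longrightarrow>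
      (LINT y:{-1..<partition_point N b}|lborel. y ^ l * (\<Sum>i\<le>(p + 1) * N. c i * F i y)) = 0"
proof -
  let ?M = "(p + 1) * N"
  \<comment> \<open>Equation \<open>j\<close> encodes the moment of order \<open>j mod (p + 1)\<close> on the \<open>(j div (p + 1))\<close>-th initial segment.\<close>
  define a where "a = (\<lambda>j i. LINT y:{-1..<partition_point N (j div (p + 1))}|lborel.
    y ^ (j mod (p + 1)) * F i y)"
  obtain c where c: "\<exists>i\<in>{..?M}. c i \<noteq> 0" "\<forall>j\<in>{..<?M}. (\<Sum>i\<le>?M. a j i * c i) = 0"
    using homogeneous_linear_system_nontrivial_solution[of "{..<?M}" "{..?M}" a] by auto
  have "(LINT y:{-1..<partition_point N b}|lborel. y ^ l * (\<Sum>i\<le>?M. c i * F i y)) = 0"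
    if b: "b < N" and l: "l \<le> p" for b l
  proof -
    let ?S = "{-1..<partition_point N b}"
    define j where "j = l + b * (p + 1)"
    have j: "j div (p + 1) = b" "j mod (p + 1) = l"
      using l div_mult_self1[of "p + 1" l b] mod_mult_self1[of l b "p + 1"] by (simp_all add: j_def)
    have "j < (b + 1) * (p + 1)"
      using l by (simp add: j_def)
    also have "\<dots> \<le> N * (p + 1)"
      using b by (intro mult_le_mono1) simp
    finally have "j < ?M"
      by (simp add: mult.commute)
    have "?S \<subseteq> {-1..1}"
      using partition_point_bounds[OF N, of b] b by auto
    then have int: "set_integrable lborel ?S (\<lambda>y. y ^ l * F i y)" for i
      using F[of i] by (intro set_integrable_power_mult set_integrable_subset[OF L2_interval_set_integrable]) auto
    have "(LINT y:?S|lborel. y ^ l * (\<Sum>i\<le>?M. c i * F i y))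
        = (LINT y:?S|lborel. (\<Sum>i\<le>?M. c i * (y ^ l * F i y)))"
      by (simp add: sum_distrib_left mult_ac)
    also have "\<dots> = (\<Sum>i\<le>?M. c i * (LINT y:?S|lborel. y ^ l * F i y))"
      using int by (simp add: set_integral_sum)
    also have "\<dots> = (\<Sum>i\<le>?M. a j i * c i)"
      unfolding a_def j by (simp add: mult.commute)
    finally show ?thesis
      using c(2) \<open>j < ?M\<close> by simp
  qed
  with c(1) show thesis
    using that by auto
qed

section \<open>Eigenvalue decay\<close>

lemma bigo_power_of_antimono_samples:
  fixes \<mu> :: "nat \<Rightarrow> real"
  assumes anti: "antimono \<mu>" and nonneg: "\<And>k. \<mu> k \<ge> 0" and q: "q \<ge> 1"
    and samples: "\<And>N. N \<ge> 1 \<Longrightarrow> \<mu> (q * N) \<le> C / real N ^ e"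
  shows "\<mu> \<in> O(\<lambda>k. 1 / real k ^ e)"
proof (rule bigoI[where c = "C * (2 * real q) ^ e"])
  have "\<mu> k \<le> C * (2 * real q) ^ e / real k ^ e" if k: "k \<ge> q" for k
  proof -
    define N where "N = k div q"
    have N: "N \<ge> 1"
      using k q by (simp add: N_def div_greater_zero_iff Suc_le_eq)
    have "k < q + q * N"
      using dividend_less_times_div[of q k] q by (simp add: N_def)
    also have "\<dots> \<le> 2 * q * N"
      using N by (simp add: algebra_simps)
    finally have "k \<le> 2 * q * N"
      by simp
    then have kN: "real k \<le> 2 * real q * real N"
      by (metis of_nat_le_iff of_nat_mult of_nat_numeral)
    have "0 \<le> C / real N ^ e" "0 < real N ^ e"
      using order_trans[OF nonneg samples[OF N]] N by simp_all
    then have C: "C \<ge> 0"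
      by (simp add: zero_le_divide_iff)
    have "\<mu> k \<le> \<mu> (q * N)"
      using anti by (rule antimonoD) (simp add: N_def mult.commute)
    also have "\<dots> \<le> C / real N ^ e"
      using samples[OF N] .
    also have "\<dots> = C * (2 * real q) ^ e / (2 * real q * real N) ^ e"
      using q by (simp add: power_mult_distrib)
    also have "\<dots> \<le> C * (2 * real q) ^ e / real k ^ e"
      using kN k q N C by (intro divide_left_mono power_mono) auto
    finally show ?thesis .
  qed
  then show "\<forall>\<^sub>F k in at_top. norm (\<mu> k) \<le> C * (2 * real q) ^ e * norm (1 / real k ^ e)"
    unfolding eventually_at_top_linorder using nonneg by (intro exI[of _ q]) auto
qed

locale K_op_eigensystem =
  fixes p :: nat and \<mu> :: "nat \<Rightarrow> real" and h :: "nat \<Rightarrow> real \<Rightarrow> real"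
  assumes p: "p \<ge> 1"
    and decreasing: "\<And>k. \<mu> (Suc k) < \<mu> k"
    and eigenfunction_L2: "\<And>k. h k \<in> L2_interval"
    and eigenfunction_nonzero: "\<And>k. \<not> (AE x in lborel. x \<in> {-1..1} \<longrightarrow> h k x = 0)"
    and eigenfunction_eq: "\<And>k. AE x in lborel. x \<in> {-1..1} \<longrightarrow> K_op p (h k) x = \<mu> k * h k x"
begin

lemma eigenfunction_measurable [measurable]: "h k \<in> borel_measurable borel"
  using eigenfunction_L2 by auto

lemma relu_transform_inner:
  "(LINT z:{-1..1}|lborel. relu_transform p (h i) z * relu_transform p (h j) z)
    = \<mu> i * (LINT x:{-1..1}|lborel. h i x * h j x)"
proof -
  have "(LINT z:{-1..1}|lborel. relu_transform p (h i) z * relu_transform p (h j) z)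
      = (LINT x:{-1..1}|lborel. relu_transform_adjoint p (relu_transform p (h i)) x * h j x)"
    using set_integral_relu_transform_adjoint_mult[OF eigenfunction_L2
        relu_transform_in_L2_interval[OF eigenfunction_L2]] by simp
  also have "\<dots> = (LINT x:{-1..1}|lborel. \<mu> i * (h i x * h j x))"
  proof (rule set_lebesgue_integral_cong_AE)
    show "AE x\<in>{-1..1} in lborel.
        relu_transform_adjoint p (relu_transform p (h i)) x * h j x = \<mu> i * (h i x * h j x)"
      using eigenfunction_eq[of i]
      by eventually_elim (simp add: K_op_eq_adjoint_relu_transform[OF eigenfunction_L2])
  qed simp_all
  finally show ?thesis
    by simp
qed

lemma eigenvalues_antimono: "antimono \<mu>"
  unfolding antimono_iff_le_Suc using decreasing less_imp_le by blast

lemma eigenvalues_distinct: "i \<noteq> j \<Longrightarrow> \<mu> i \<noteq> \<mu> j"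
proof -
  have "\<mu> j < \<mu> i" if "i < j" for i j
    using lift_Suc_mono_less[of "\<lambda>n. - \<mu> n" i j] decreasing that by simp
  then show "i \<noteq> j \<Longrightarrow> \<mu> i \<noteq> \<mu> j"
    by (metis linorder_neq_iff order_less_irrefl)
qed

lemma eigenfunctions_orthogonal:
  assumes "i \<noteq> j"
  shows "(LINT x:{-1..1}|lborel. h i x * h j x) = 0"
proof -
  have "\<mu> i * (LINT x:{-1..1}|lborel. h i x * h j x) = \<mu> j * (LINT x:{-1..1}|lborel. h j x * h i x)"
    using relu_transform_inner[of i j] relu_transform_inner[of j i] by (simp add: mult.commute)
  then have "(\<mu> i - \<mu> j) * (LINT x:{-1..1}|lborel. h i x * h j x) = 0"
    by (simp add: algebra_simps mult.commute)
  then show ?thesis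
    using eigenvalues_distinct[OF assms] by simp
qed

lemma eigenvalue_nonneg: "\<mu> k \<ge> 0"
proof -
  have "0 \<le> (LINT z:{-1..1}|lborel. relu_transform p (h k) z * relu_transform p (h k) z)"
    unfolding set_lebesgue_integral_def
    by (intro Bochner_Integration.integral_nonneg) (auto simp: indicator_def)
  moreover have "0 < (LINT x:{-1..1}|lborel. h k x * h k x)"
    by (rule set_integral_square_pos[OF eigenfunction_L2 eigenfunction_nonzero])
  ultimately show ?thesis
    using relu_transform_inner[of k k] by (simp add: zero_le_mult_iff)
qed

lemma set_integral_eigen_combination_square:
  "(LINT x:{-1..1}|lborel. (\<Sum>i\<le>M. c i * h i x) * (\<Sum>i\<le>M. c i * h i x))
    = (\<Sum>i\<le>M. c i * c i * (LINT x:{-1..1}|lborel. h i x * h i x))"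
  unfolding set_integral_combination_square_expand(2)[OF eigenfunction_L2]
  by (rule sum_sum_eq_diagonal) (simp_all add: eigenfunctions_orthogonal)

lemma set_integral_relu_transform_eigen_combination_square:
  "(LINT z:{-1..1}|lborel. (relu_transform p (\<lambda>x. \<Sum>i\<le>M. c i * h i x) z)\<^sup>2)
    = (\<Sum>i\<le>M. c i * c i * (\<mu> i * (LINT x:{-1..1}|lborel. h i x * h i x)))"
  unfolding relu_transform_combination[OF eigenfunction_L2] power2_eq_square
    set_integral_combination_square_expand(2)[OF relu_transform_in_L2_interval[OF eigenfunction_L2]]
    relu_transform_inner
  by (rule sum_sum_eq_diagonal) (simp_all add: eigenfunctions_orthogonal)

lemma relu_transform_eigen_combination_norm_ge:
  "\<mu> M * (LINT x:{-1..1}|lborel. (\<Sum>i\<le>M. c i * h i x) * (\<Sum>i\<le>M. c i * h i x))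
    \<le> (LINT z:{-1..1}|lborel. (relu_transform p (\<lambda>x. \<Sum>i\<le>M. c i * h i x) z)\<^sup>2)"
  unfolding set_integral_eigen_combination_square set_integral_relu_transform_eigen_combination_square
  unfolding sum_distrib_left
proof (rule sum_mono)
  fix i
  assume "i \<in> {..M}"
  then have "\<mu> M \<le> \<mu> i"
    using eigenvalues_antimono by (auto dest: antimonoD)
  moreover have "0 < (LINT x:{-1..1}|lborel. h i x * h i x)"
    by (rule set_integral_square_pos[OF eigenfunction_L2 eigenfunction_nonzero])
  ultimately have "c i * c i * (\<mu> M * (LINT x:{-1..1}|lborel. h i x * h i x))
      \<le> c i * c i * (\<mu> i * (LINT x:{-1..1}|lborel. h i x * h i x))"
    by (intro mult_left_mono mult_right_mono) auto
  then show "\<mu> M * (c i * c i * (LINT x:{-1..1}|lborel. h i x * h i x))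
      \<le> c i * c i * (\<mu> i * (LINT x:{-1..1}|lborel. h i x * h i x))"
    by (simp only: mult.left_commute)
qed

lemma eigenvalue_sample_bound:
  assumes N: "N \<ge> 1"
  shows "\<mu> ((p + 1) * N) \<le> 2 ^ (2 * p + 2) / real N ^ (2 * p + 2)"
proof -
  let ?M = "(p + 1) * N"
  obtain c where c: "\<exists>i\<le>?M. c i \<noteq> 0"
    and moments: "\<And>b l. b < N \<Longrightarrow> l \<le> p \<Longrightarrow>
      (LINT y:{-1..<partition_point N b}|lborel. y ^ l * (\<Sum>i\<le>?M. c i * h i y)) = 0"
    using exists_combination_with_vanishing_moments[where F = h and p = p, OF eigenfunction_L2 N] by blast
  define v where "v = (\<lambda>x. \<Sum>i\<le>?M. c i * h i x)"
  have v: "v \<in> L2_interval"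
    unfolding v_def using eigenfunction_L2 by (rule L2_interval_combination)
  obtain i0 where i0: "i0 \<le> ?M" "c i0 \<noteq> 0"
    using c by blast
  have norm_pos: "0 < (LINT x:{-1..1}|lborel. h i x * h i x)" for i
    by (rule set_integral_square_pos[OF eigenfunction_L2 eigenfunction_nonzero])
  have v_pos: "(LINT x:{-1..1}|lborel. v x * v x) > 0"
    unfolding v_def set_integral_eigen_combination_square
  proof (rule sum_pos2[of _ i0])
    have "0 < c i0 * c i0"
      using i0(2) not_real_square_gt_zero by blast
    then show "0 < c i0 * c i0 * (LINT x:{-1..1}|lborel. h i0 x * h i0 x)"
      using norm_pos by (rule mult_pos_pos)
    show "0 \<le> c i * c i * (LINT x:{-1..1}|lborel. h i x * h i x)" for i
      using norm_pos[of i] by simp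
  qed (use i0 in simp_all)
  have "\<mu> ?M * (LINT x:{-1..1}|lborel. v x * v x) \<le> (LINT z:{-1..1}|lborel. (relu_transform p v z)\<^sup>2)"
    unfolding v_def by (rule relu_transform_eigen_combination_norm_ge)
  also have "\<dots> \<le> (2 / real N) ^ (2 * p + 2) * (LINT x:{-1..1}|lborel. v x * v x)"
    using moments unfolding v_def by (rule relu_transform_norm_le[OF p v[unfolded v_def] N])
  finally have "\<mu> ?M \<le> (2 / real N) ^ (2 * p + 2)"
    using v_pos by (rule mult_right_le_imp_le)
  then show ?thesis
    by (simp add: power_divide)
qed

lemma eigenvalues_bigo: "\<mu> \<in> O(\<lambda>k. 1 / real k ^ (2 * p + 2))"
  by (rule bigo_power_of_antimono_samples[where q = "p + 1" and C = "2 ^ (2 * p + 2)"])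
    (use eigenvalues_antimono eigenvalue_nonneg eigenvalue_sample_bound in auto)

end

theorem proposition3:
  fixes p :: nat and \<mu> :: "nat \<Rightarrow> real"
  assumes "p \<ge> 1"
    and "\<And>k. \<mu> (Suc k) < \<mu> k"
    and "range \<mu> = {m. m \<noteq> 0 \<and> is_eigenvalue_K p m}"
  shows "\<mu> \<in> O(\<lambda>k. 1 / real k ^ (2 * p + 2))"
proof -
  have "\<forall>k. \<exists>f. f \<in> L2_interval \<and> \<not> (AE x in lborel. x \<in> {-1..1} \<longrightarrow> f x = 0) \<and>
      (AE x in lborel. x \<in> {-1..1} \<longrightarrow> K_op p f x = \<mu> k * f x)"
    using assms(3) unfolding is_eigenvalue_K_def by blast
  from choice[OF this] obtain h where "\<forall>k. h k \<in> L2_interval \<and> \<not> (AE x in lborel. x \<in> {-1..1} \<longrightarrow> h k x = 0) \<and>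
      (AE x in lborel. x \<in> {-1..1} \<longrightarrow> K_op p (h k) x = \<mu> k * h k x)"
    by blast
  then interpret K_op_eigensystem p \<mu> h
    using assms(1,2) by unfold_locales auto
  show ?thesis
    by (rule eigenvalues_bigo)
qed

end
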